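(* Let $U=(U(n))_{n\ge0}$ be defined by $U(0)=1$ and $U(n+1)=3U(n)+1$ for $n\ge0$. Let $\mathbf{x}$ be the fixed point starting with $a$ of the morphism $a\mapsto aaab$, $b\mapsto b$, and let $\tau$ be the coding $a\mapsto0$, $b\mapsto1$. Then the binary sequence $\tau(\mathbf{x})$ satisfies $C_2(\tau(\mathbf{x}),N)\gg N$, i.e., there is $c>0$ with $C_2(\tau(\mathbf{x}),N)\ge cN$ for all sufficiently large $N$.
   Context: Correlation measure: for $\mathbf{s}$ over $\{0,1\}$, $D=(d_1,d_2)$ with $0\le d_1<d_2$ and $M\in\mathbb{N}$, put $V(\mathbf{s},M,D)=\sum_{n=0}^{M-1}(-1)^{\mathbf{s}(n+d_1)+\mathbf{s}(n+d_2)}$, and $C_2(\mathbf{s},N)=\max_{M,D}|V(\mathbf{s},M,D)|$ over all such $D$ and integers $M$ with $M+d_2\le N$. (For reference: $\tau(\mathbf{x})(n)$ is the output, on the greedy $U$-representation of $n$, of the DFAO with states $A$ (initial, output 0), $B$ (output 0), $C$ (output 1) and transitions $A\xrightarrow{1,2}B$, $A\xrightarrow{3}C$, $B\xrightarrow{0,1,2}B$, $B\xrightarrow{3}C$, $C\xrightarrow{0}C$.) *)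

theory Defs
  imports Complex_Main
begin

fun U :: "nat \<Rightarrow> nat" where
  "U 0 = 1"
| "U (Suc n) = 3 * U n + 1"

datatype letter = La | Lb

fun phi_letter :: "letter \<Rightarrow> letter list" where
  "phi_letter La = [La, La, La, Lb]"
| "phi_letter Lb = [Lb]"

definition phi :: "letter list \<Rightarrow> letter list" where
  "phi w = concat (map phi_letter w)"

text \<open>The fixed point starting with a: the limit of the words phi^k(a), each a prefix of
  the next; phi^(n+1)(a) has length U(n+1) > n, so its n-th letter is the n-th letter of x.\<close>
definition xfix :: "nat \<Rightarrow> letter" where
  "xfix n = (phi ^^ (Suc n)) [La] ! n"

fun tau :: "letter \<Rightarrow> nat" where
  "tau La = 0"
| "tau Lb = 1"

definition V :: "(nat \<Rightarrow> nat) \<Rightarrow> nat \<Rightarrow> nat \<Rightarrow> nat \<Rightarrow> int" where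
  "V s M d1 d2 = (\<Sum>n<M. (-1) ^ (s (n + d1) + s (n + d2)))"

definition C2 :: "(nat \<Rightarrow> nat) \<Rightarrow> nat \<Rightarrow> int" where
  "C2 s N = Max {\<bar>V s M d1 d2\<bar> | M d1 d2. d1 < d2 \<and> M + d2 \<le> N}"

end

theory Submission
  imports Defs
begin

text \<open>Write \<open>P\<^sub>k = \<phi>\<^sup>k(a)\<close>, a word of length \<open>U k\<close>. Since \<open>P\<^sub>k\<^sub>+\<^sub>1 = P\<^sub>k P\<^sub>k P\<^sub>k b\<close>, the fixed point
  begins with \<open>P\<^sub>k P\<^sub>k P\<^sub>k\<close>, so it satisfies \<open>x(n + U k) = x(n)\<close> for all \<open>n < 2 U k\<close>. For the
  shift \<open>D = (0, U k)\<close> and \<open>M = 2 U k\<close> every summand of \<open>V\<close> is \<open>1\<close>, whence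
  \<open>C\<^sub>2(\<tau>(x), N) \<ge> 2 U k\<close> whenever \<open>3 U k \<le> N\<close>. As \<open>U (k+1) \<le> 4 U k\<close>, every \<open>N \<ge> 3\<close> lies
  between \<open>3 U k\<close> and \<open>12 U k\<close> for some \<open>k\<close>, which gives \<open>C\<^sub>2(\<tau>(x), N) \<ge> N / 6\<close>.\<close>

lemma phi_append: "phi (u @ v) = phi u @ phi v"
  by (simp add: phi_def)

lemma funpow_phi_append: "(phi ^^ k) (u @ v) = (phi ^^ k) u @ (phi ^^ k) v"
  by (induction k) (simp_all add: phi_append)

lemma funpow_phi_Lb: "(phi ^^ k) [Lb] = [Lb]"
  by (induction k) (simp_all add: phi_def)

lemma funpow_phi_La_Suc:
  "(phi ^^ Suc k) [La] = (phi ^^ k) [La] @ (phi ^^ k) [La] @ (phi ^^ k) [La] @ [Lb]"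
proof -
  have "(phi ^^ Suc k) [La] = (phi ^^ k) (phi [La])"
    by (simp add: funpow_Suc_right del: funpow.simps)
  also have "phi [La] = [La] @ [La] @ [La] @ [Lb]"
    by (simp add: phi_def)
  finally show ?thesis
    by (simp only: funpow_phi_append funpow_phi_Lb)
qed

lemma length_funpow_phi_La: "length ((phi ^^ k) [La]) = U k"
  by (induction k) (simp_all only: funpow_phi_La_Suc, simp_all)

lemma U_pos: "U k > 0"
  by (cases k) auto

lemma less_U: "n < U n"
  by (induction n) auto

lemma U_mono: "k \<le> m \<Longrightarrow> U k \<le> U m"
  by (induction m rule: dec_induct) auto

lemma U_Suc_le: "U (Suc k) \<le> 4 * U k"
  using U_pos[of k] by simp

lemma nth_funpow_phi_La_mono:
  assumes "k \<le> m" and "n < U k"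
  shows "(phi ^^ m) [La] ! n = (phi ^^ k) [La] ! n"
  using assms(1)
proof (induction m rule: dec_induct)
  case (step m)
  have "n < length ((phi ^^ m) [La])"
    using assms(2) U_mono[OF step.hyps(1)] by (simp add: length_funpow_phi_La)
  then show ?case
    by (simp only: funpow_phi_La_Suc nth_append_left step.IH)
qed simp

lemma xfix_eq_nth:
  assumes "n < U k"
  shows "xfix n = (phi ^^ k) [La] ! n"
proof -
  let ?m = "max k (Suc n)"
  have "xfix n = (phi ^^ ?m) [La] ! n"
    unfolding xfix_def using less_U[of "Suc n"]
    by (intro nth_funpow_phi_La_mono[symmetric]) simp_all
  also have "\<dots> = (phi ^^ k) [La] ! n"
    using assms by (intro nth_funpow_phi_La_mono) simp_all
  finally show ?thesis .
qed

lemma nth_triple_append_shift: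
  assumes "n < 2 * length u"
  shows "(u @ u @ u @ v) ! (length u + n) = (u @ u @ u @ v) ! n"
  using assms by (auto simp: nth_append)

lemma xfix_add_U:
  assumes "n < 2 * U k"
  shows "xfix (n + U k) = xfix n"
  using assms nth_triple_append_shift[of n "(phi ^^ k) [La]" "[Lb]"]
  by (simp add: xfix_eq_nth[of _ "Suc k"] funpow_phi_La_Suc length_funpow_phi_La add.commute
      del: funpow.simps)

lemma V_eq_if_shift_invariant:
  assumes "\<And>n. n < M \<Longrightarrow> s (n + d1) = s (n + d2)"
  shows "V s M d1 d2 = int M"
proof -
  have "V s M d1 d2 = (\<Sum>n<M. 1)"
    unfolding V_def
    by (rule sum.cong) (simp_all add: assms flip: mult_2)
  then show ?thesis
    by simp
qed

lemma abs_V_le_C2: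
  assumes "d1 < d2" and "M + d2 \<le> N"
  shows "\<bar>V s M d1 d2\<bar> \<le> C2 s N"
proof -
  let ?S = "{\<bar>V s M d1 d2\<bar> | M d1 d2. d1 < d2 \<and> M + d2 \<le> N}"
  have "?S \<subseteq> (\<lambda>(M, d1, d2). \<bar>V s M d1 d2\<bar>) ` ({..N} \<times> {..N} \<times> {..N})"
    by (auto simp: image_iff) (metis atMost_iff le_add1 le_add2 le_trans less_imp_le_nat)
  then have "finite ?S"
    by (rule finite_subset) simp
  moreover have "\<bar>V s M d1 d2\<bar> \<in> ?S"
    using assms by blast
  ultimately show ?thesis
    unfolding C2_def by (rule Max_ge)
qed

lemma C2_xfix_ge:
  assumes "3 * U k \<le> N"
  shows "int (2 * U k) \<le> C2 (tau \<circ> xfix) N"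
proof -
  have "V (tau \<circ> xfix) (2 * U k) 0 (U k) = int (2 * U k)"
    by (rule V_eq_if_shift_invariant) (simp add: xfix_add_U)
  moreover have "\<bar>V (tau \<circ> xfix) (2 * U k) 0 (U k)\<bar> \<le> C2 (tau \<circ> xfix) N"
    using assms U_pos[of k] by (intro abs_V_le_C2) simp_all
  ultimately show ?thesis
    by simp
qed

lemma exists_U_bracket: "3 \<le> N \<Longrightarrow> \<exists>k. 3 * U k \<le> N \<and> N \<le> 12 * U k"
proof (induction N rule: dec_induct)
  case base
  show ?case by (intro exI[of _ 0]) simp
next
  case (step N)
  then obtain k where k: "3 * U k \<le> N" "N \<le> 12 * U k"
    by blast
  show ?case
  proof (cases "Suc N \<le> 12 * U k")
    case True
    with k show ?thesis by (intro exI[of _ k]) simp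
  next
    case False
    with k U_Suc_le[of k] show ?thesis
      by (intro exI[of _ "Suc k"]) simp
  qed
qed

theorem mainTheorem7:
  shows "\<exists>c::real. c > 0 \<and> (\<exists>N0. \<forall>N\<ge>N0. real_of_int (C2 (tau \<circ> xfix) N) \<ge> c * real N)"
proof (intro exI[of _ "1/6"] conjI exI[of _ 3] allI impI)
  fix N :: nat
  assume "3 \<le> N"
  then obtain k where k: "3 * U k \<le> N" "N \<le> 12 * U k"
    using exists_U_bracket by blast
  have "real (2 * U k) \<le> real_of_int (C2 (tau \<circ> xfix) N)"
    using C2_xfix_ge[OF k(1)] by (metis of_int_le_iff of_int_of_nat_eq)
  moreover have "1/6 * real N \<le> real (2 * U k)"
    using k(2) by simp
  ultimately show "1/6 * real N \<le> real_of_int (C2 (tau \<circ> xfix) N)"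
    by linarith
qed simp

end
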